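(* Let $C$ be a right cancellative Möbius category and $R$ a commutative ring with identity. The relation on $C_1$ given by $f\le g$ iff $g=hf$ for some morphism $h$ is a partial order, and the convolution algebra $([C_1,R],\star)$ is isomorphic to the subalgebra of the incidence algebra $[\mathbb{I}_{(C_1,\le)},R]$ consisting of those $\alpha$ with $\alpha[f,gf]=\alpha[1_{tf},g]$ for all composable $f,g$, via the map sending $\beta\in[C_1,R]$ to $\widehat{\beta}$ with $\widehat{\beta}[f,hf]=\beta(h)$.
   Context: $C_1$ is the set of morphisms; $tf$ denotes the target of $f$. A category is Möbius if each morphism $f$ has finitely many proper decompositions (tuples $(f_1,\dots,f_n)$ with $f_n\cdots f_1=f$ and, for $n\ge2$, no $f_i$ an identity). $C$ is right cancellative if $gf=hf$ implies $g=h$. The convolution algebra $[C_1,R]$ has product $(\alpha\star\beta)(f)=\sum_{f_2f_1=f}\alpha(f_1)\beta(f_2)$. The incidence algebra of a locally finite poset $P$ consists of maps on intervals $[a,c]$ ($a\le c$) with $(f\star g)[a,c]=\sum_{a\le b\le c}f[a,b]g[b,c]$. *)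

theory Defs
  imports Main
begin

text \<open>A (small) category presented by its morphisms (all elements of type 'm),
  objects (all elements of type 'o), source s, target t, identities e and
  partial composition cmp g f (meaningful when t f = s g; written g f).\<close>

definition category :: "('m \<Rightarrow> 'o) \<Rightarrow> ('m \<Rightarrow> 'o) \<Rightarrow> ('o \<Rightarrow> 'm) \<Rightarrow> ('m \<Rightarrow> 'm \<Rightarrow> 'm) \<Rightarrow> bool" where
  "category s t e cmp \<longleftrightarrow>
     (\<forall>x. s (e x) = x \<and> t (e x) = x) \<and>
     (\<forall>f g. t f = s g \<longrightarrow> s (cmp g f) = s f \<and> t (cmp g f) = t g) \<and>
     (\<forall>f. cmp (e (t f)) f = f \<and> cmp f (e (s f)) = f) \<and>
     (\<forall>f g h. t f = s g \<longrightarrow> t g = s h \<longrightarrow> cmp h (cmp g f) = cmp (cmp h g) f)"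

definition is_identity :: "('m \<Rightarrow> 'o) \<Rightarrow> ('o \<Rightarrow> 'm) \<Rightarrow> 'm \<Rightarrow> bool" where
  "is_identity s e f \<longleftrightarrow> (\<exists>x. f = e x)"

fun comp_list :: "('m \<Rightarrow> 'm \<Rightarrow> 'm) \<Rightarrow> 'm list \<Rightarrow> 'm" where
  "comp_list cmp [f] = f"
| "comp_list cmp (f # g # fs) = comp_list cmp (cmp g f # fs)"
| "comp_list cmp [] = undefined"

definition composable_list :: "('m \<Rightarrow> 'o) \<Rightarrow> ('m \<Rightarrow> 'o) \<Rightarrow> 'm list \<Rightarrow> bool" where
  "composable_list s t fs \<longleftrightarrow> (\<forall>i. Suc i < length fs \<longrightarrow> t (fs ! i) = s (fs ! Suc i))"

definition proper_decomps :: "('m \<Rightarrow> 'o) \<Rightarrow> ('m \<Rightarrow> 'o) \<Rightarrow> ('o \<Rightarrow> 'm) \<Rightarrow> ('m \<Rightarrow> 'm \<Rightarrow> 'm) \<Rightarrow> 'm \<Rightarrow> 'm list set" where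
  "proper_decomps s t e cmp f = {fs. fs \<noteq> [] \<and> composable_list s t fs \<and> comp_list cmp fs = f \<and>
      (length fs \<ge> 2 \<longrightarrow> (\<forall>g \<in> set fs. \<not> is_identity s e g))}"

definition moebius_category :: "('m \<Rightarrow> 'o) \<Rightarrow> ('m \<Rightarrow> 'o) \<Rightarrow> ('o \<Rightarrow> 'm) \<Rightarrow> ('m \<Rightarrow> 'm \<Rightarrow> 'm) \<Rightarrow> bool" where
  "moebius_category s t e cmp \<longleftrightarrow> category s t e cmp \<and> (\<forall>f. finite (proper_decomps s t e cmp f))"

definition right_cancellative :: "('m \<Rightarrow> 'o) \<Rightarrow> ('m \<Rightarrow> 'o) \<Rightarrow> ('m \<Rightarrow> 'm \<Rightarrow> 'm) \<Rightarrow> bool" where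
  "right_cancellative s t cmp \<longleftrightarrow>
     (\<forall>f g h. t f = s g \<longrightarrow> t f = s h \<longrightarrow> cmp g f = cmp h f \<longrightarrow> g = h)"

definition conv :: "('m \<Rightarrow> 'o) \<Rightarrow> ('m \<Rightarrow> 'o) \<Rightarrow> ('m \<Rightarrow> 'm \<Rightarrow> 'm) \<Rightarrow> ('m \<Rightarrow> 'r::comm_ring_1) \<Rightarrow> ('m \<Rightarrow> 'r) \<Rightarrow> 'm \<Rightarrow> 'r" where
  "conv s t cmp \<alpha> \<beta> f = (\<Sum>(f1, f2) \<in> {(f1, f2). t f1 = s f2 \<and> cmp f2 f1 = f}. \<alpha> f1 * \<beta> f2)"

definition conv_unit :: "('o \<Rightarrow> 'm) \<Rightarrow> 'm \<Rightarrow> 'r::comm_ring_1" where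
  "conv_unit e f = (if \<exists>x. f = e x then 1 else 0)"

definition mle :: "('m \<Rightarrow> 'o) \<Rightarrow> ('m \<Rightarrow> 'o) \<Rightarrow> ('m \<Rightarrow> 'm \<Rightarrow> 'm) \<Rightarrow> 'm \<Rightarrow> 'm \<Rightarrow> bool" where
  "mle s t cmp f g \<longleftrightarrow> (\<exists>h. t f = s h \<and> g = cmp h f)"

text \<open>Incidence algebra of a locally finite poset (P, le): functions on intervals
  [a,c], a \<le> c, represented as functions vanishing off intervals.\<close>
definition incidence_algebra :: "('a \<Rightarrow> 'a \<Rightarrow> bool) \<Rightarrow> ('a \<Rightarrow> 'a \<Rightarrow> 'r::comm_ring_1) set" where
  "incidence_algebra le = {F. \<forall>a c. \<not> le a c \<longrightarrow> F a c = 0}"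

definition inc_mult :: "('a \<Rightarrow> 'a \<Rightarrow> bool) \<Rightarrow> ('a \<Rightarrow> 'a \<Rightarrow> 'r::comm_ring_1) \<Rightarrow> ('a \<Rightarrow> 'a \<Rightarrow> 'r) \<Rightarrow> 'a \<Rightarrow> 'a \<Rightarrow> 'r" where
  "inc_mult le F G a c = (if le a c then (\<Sum>b \<in> {b. le a b \<and> le b c}. F a b * G b c) else 0)"

definition inc_unit :: "('a \<Rightarrow> 'a \<Rightarrow> bool) \<Rightarrow> 'a \<Rightarrow> 'a \<Rightarrow> 'r::comm_ring_1" where
  "inc_unit le a c = (if a = c then 1 else 0)"

definition invariant_subalgebra :: "('m \<Rightarrow> 'o) \<Rightarrow> ('m \<Rightarrow> 'o) \<Rightarrow> ('o \<Rightarrow> 'm) \<Rightarrow> ('m \<Rightarrow> 'm \<Rightarrow> 'm) \<Rightarrow> ('m \<Rightarrow> 'm \<Rightarrow> 'r::comm_ring_1) set" where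
  "invariant_subalgebra s t e cmp =
     {\<alpha> \<in> incidence_algebra (mle s t cmp). \<forall>f g. t f = s g \<longrightarrow> \<alpha> f (cmp g f) = \<alpha> (e (t f)) g}"

text \<open>The map \<beta> \<mapsto> \<beta>-hat with \<beta>-hat[f, h f] = \<beta>(h) (h unique by right cancellativity).\<close>
definition hat :: "('m \<Rightarrow> 'o) \<Rightarrow> ('m \<Rightarrow> 'o) \<Rightarrow> ('m \<Rightarrow> 'm \<Rightarrow> 'm) \<Rightarrow> ('m \<Rightarrow> 'r::comm_ring_1) \<Rightarrow> 'm \<Rightarrow> 'm \<Rightarrow> 'r" where
  "hat s t cmp \<beta> f g = (if mle s t cmp f g then \<beta> (THE h. t f = s h \<and> g = cmp h f) else 0)"

end

theory Submission
  imports Defs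
begin

(*
  Right cancellativity then gives
  (3) the interval [a, g a] is in bijection with the factorisations of g,
      via (h, k) \<mapsto> h a.
  From (1) we get antisymmetry of \<le>, from (2) and (3) local finiteness, and the
  bijection (3) reindexes the convolution sum into the incidence-algebra sum.
*)

locale category_struct =
  fixes s t :: "'m \<Rightarrow> 'o" and e :: "'o \<Rightarrow> 'm" and cmp :: "'m \<Rightarrow> 'm \<Rightarrow> 'm"
  assumes cat: "category s t e cmp"
begin

lemma source_id [simp]: "s (e x) = x" and target_id [simp]: "t (e x) = x"
  using cat unfolding category_def by auto

lemma source_cmp [simp]: "t f = s g \<Longrightarrow> s (cmp g f) = s f"
  and target_cmp [simp]: "t f = s g \<Longrightarrow> t (cmp g f) = t g"
  using cat unfolding category_def by auto

lemma id_left [simp]: "cmp (e (t f)) f = f" and id_right [simp]: "cmp f (e (s f)) = f"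
  using cat unfolding category_def by auto

lemma assoc: "t f = s g \<Longrightarrow> t g = s h \<Longrightarrow> cmp h (cmp g f) = cmp (cmp h g) f"
  using cat unfolding category_def by auto

lemma identity_at_source: "is_identity s e h \<Longrightarrow> h = e (s h)"
  and identity_at_target: "is_identity s e h \<Longrightarrow> h = e (t h)"
  unfolding is_identity_def by auto

end

lemma composable_list_Cons2:
  "composable_list s t (x # y # xs) \<longleftrightarrow> t x = s y \<and> composable_list s t (y # xs)"
  unfolding composable_list_def
  by (auto simp: All_less_Suc2)

lemma composable_list_singleton: "composable_list s t [x]"
  unfolding composable_list_def by simp

primrec alternating :: "'a \<Rightarrow> 'a \<Rightarrow> nat \<Rightarrow> 'a list" where
  "alternating h k 0 = [h, k]"
| "alternating h k (Suc n) = h # k # alternating h k n"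

lemma length_alternating: "length (alternating h k n) = 2 * n + 2"
  by (induction n) auto

lemma set_alternating: "set (alternating h k n) = {h, k}"
  by (induction n) auto

lemma alternating_Cons2: "\<exists>r. alternating h k n = h # k # r"
  by (cases n) auto

lemma inj_alternating: "inj (alternating h k)"
  by (rule injI) (metis length_alternating add_right_cancel mult_left_cancel zero_neq_numeral)

context category_struct
begin

lemma composable_alternating:
  assumes "t h = s k" "t k = s h"
  shows "composable_list s t (alternating h k n)"
proof (induction n)
  case 0
  show ?case using assms by (simp add: composable_list_Cons2 composable_list_singleton)
next
  case (Suc n)
  obtain r where "alternating h k n = h # k # r" using alternating_Cons2 by metis
  with Suc assms show ?case by (simp add: composable_list_Cons2)
qed

lemma comp_list_alternating:
  assumes "t h = s k" and "cmp k h = e x" and "s h = x"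
  shows "comp_list cmp (alternating h k n) = e x"
proof (induction n)
  case 0
  show ?case using assms by simp
next
  case (Suc n)
  obtain r where r: "alternating h k n = h # k # r" using alternating_Cons2 by metis
  have "cmp h (e x) = h" using id_right[of h] assms(3) by simp
  then show ?case using Suc assms by (simp add: r)
qed

text \<open>In a Moebius category every split monomorphism is an identity: if k h = 1_x
  with h not an identity, the alternating lists form infinitely many proper
  decompositions of 1_x.\<close>
lemma split_mono_is_identity:
  assumes hk: "t h = s k" and kh: "cmp k h = e x"
    and fin: "finite (proper_decomps s t e cmp (e x))"
  shows "is_identity s e h"
proof (rule ccontr)
  assume h_non_id: "\<not> is_identity s e h"
  have src_h: "s h = x" using source_cmp[OF hk] kh by (metis source_id)
  have tgt_k: "t k = s h" using target_cmp[OF hk] kh src_h by (metis target_id)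
  have k_non_id: "\<not> is_identity s e k"
  proof
    assume "is_identity s e k"
    then have "k = e (t h)" using hk identity_at_source by metis
    then have "cmp k h = h" by simp
    with kh h_non_id show False unfolding is_identity_def by auto
  qed
  have "alternating h k n \<in> proper_decomps s t e cmp (e x)" for n
  proof -
    have "alternating h k n \<noteq> []" by (cases n) auto
    then show ?thesis
      unfolding proper_decomps_def
      using comp_list_alternating[OF hk kh src_h] composable_alternating[OF hk tgt_k]
        set_alternating[of h k n] length_alternating[of h k n] h_non_id k_non_id
      by simp
  qed
  then have "range (alternating h k) \<subseteq> proper_decomps s t e cmp (e x)" by blast
  moreover have "infinite (range (alternating h k))"
    using finite_imageD[OF _ inj_alternating] by auto
  ultimately show False using fin finite_subset by blast
qed

definition factorisations :: "'m \<Rightarrow> ('m \<times> 'm) set" where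
  "factorisations g = {(h, k). t h = s k \<and> cmp k h = g}"

text \<open>A factorisation with no identity factor is a proper decomposition of length
  two; so in a Moebius category there are only finitely many factorisations.\<close>
lemma finite_factorisations:
  assumes fin: "finite (proper_decomps s t e cmp g)"
  shows "finite (factorisations g)"
proof -
  have "factorisations g \<subseteq> {(e (s g), g), (g, e (t g))}
      \<union> (\<lambda>fs. (fs ! 0, fs ! 1)) ` proper_decomps s t e cmp g"
  proof
    fix p assume "p \<in> factorisations g"
    then obtain h k where p: "p = (h, k)" and hk: "t h = s k" and g: "g = cmp k h"
      unfolding factorisations_def by auto
    consider "is_identity s e h" | "is_identity s e k"
      | "\<not> is_identity s e h" "\<not> is_identity s e k" by blast
    then show "p \<in> {(e (s g), g), (g, e (t g))}
        \<union> (\<lambda>fs. (fs ! 0, fs ! 1)) ` proper_decomps s t e cmp g"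
    proof cases
      case 1
      then have h: "h = e (s k)" using hk identity_at_target by metis
      then have "g = k" using g id_right[of k] by simp
      then show ?thesis using h p by simp
    next
      case 2
      then have k: "k = e (t h)" using hk identity_at_source by metis
      then have "g = h" using g id_left[of h] by simp
      then show ?thesis using k p by simp
    next
      case 3
      then have "[h, k] \<in> proper_decomps s t e cmp g"
        unfolding proper_decomps_def
        using hk g by (auto simp: composable_list_Cons2 composable_list_singleton)
      then show ?thesis using p by force
    qed
  qed
  moreover have "finite ((\<lambda>fs. (fs ! 0, fs ! 1)) ` proper_decomps s t e cmp g)"
    using fin by (rule finite_imageI)
  ultimately show ?thesis
    by (meson finite.emptyI finite.insertI finite_UnI finite_subset)
qed

lemma mle_refl: "mle s t cmp f f"
  unfolding mle_def by (rule exI[of _ "e (t f)"]) simp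

lemma mle_trans:
  assumes "mle s t cmp f g" and "mle s t cmp g h"
  shows "mle s t cmp f h"
proof -
  obtain a b where "t f = s a" "g = cmp a f" "t g = s b" "h = cmp b g"
    using assms unfolding mle_def by blast
  then show ?thesis unfolding mle_def
    by (intro exI[of _ "cmp b a"]) (simp add: assoc)
qed

definition interval :: "'m \<Rightarrow> 'm \<Rightarrow> 'm set" where
  "interval a c = {b. mle s t cmp a b \<and> mle s t cmp b c}"

end

locale right_cancellative_category = category_struct s t e cmp
  for s t :: "'m \<Rightarrow> 'o" and e :: "'o \<Rightarrow> 'm" and cmp :: "'m \<Rightarrow> 'm \<Rightarrow> 'm" +
  assumes rc: "right_cancellative s t cmp"
begin

lemma cancel: "t f = s g \<Longrightarrow> t f = s h \<Longrightarrow> cmp g f = cmp h f \<Longrightarrow> g = h"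
  using rc unfolding right_cancellative_def by blast

lemma factorisation_through:
  assumes h: "t a = s h" and k: "t (cmp h a) = s k" and g: "t a = s g"
    and c: "cmp k (cmp h a) = cmp g a"
  shows "t h = s k" and "cmp k h = g"
proof -
  show hk: "t h = s k" using k h by simp
  have "cmp (cmp k h) a = cmp g a" using c assoc[OF h hk] by simp
  then show "cmp k h = g" using cancel[of a "cmp k h" g] h hk g by simp
qed

text \<open>In a Moebius category the preorder \<le> is antisymmetric: g = h f and f = k g
  give k h = 1 by cancellation, so h is an identity.\<close>
lemma mle_antisym:
  assumes fin: "\<forall>f. finite (proper_decomps s t e cmp f)"
    and fg: "mle s t cmp f g" and gf: "mle s t cmp g f"
  shows "f = g"
proof -
  obtain h where h: "t f = s h" "g = cmp h f" using fg unfolding mle_def by blast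
  obtain k where k: "t g = s k" "f = cmp k g" using gf unfolding mle_def by blast
  have "t (cmp h f) = s k" using h(2) k(1) by simp
  moreover have "cmp k (cmp h f) = cmp (e (t f)) f"
    by (simp only: h(2)[symmetric] k(2)[symmetric] id_left)
  ultimately have "t h = s k" and "cmp k h = e (t f)"
    using factorisation_through[OF h(1) _ source_id[symmetric]] by auto
  then have "is_identity s e h" using split_mono_is_identity fin by blast
  then have "h = e (t f)" using h(1) identity_at_source by metis
  then show ?thesis using h(2) by simp
qed

lemma factorisation_compose:
  assumes g: "t a = s g" and hk: "(h, k) \<in> factorisations g"
  shows "t a = s h" and "t (cmp h a) = s k" and "cmp k (cmp h a) = cmp g a"
proof -
  have hk': "t h = s k" "cmp k h = g" using hk unfolding factorisations_def by auto
  show ah: "t a = s h" using g source_cmp[OF hk'(1)] hk'(2) by simp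
  show "t (cmp h a) = s k" using ah hk'(1) by simp
  show "cmp k (cmp h a) = cmp g a" using assoc[OF ah hk'(1)] hk'(2) by simp
qed

lemma interval_factorisations:
  assumes g: "t a = s g"
  shows "bij_betw (\<lambda>(h, k). cmp h a) (factorisations g) (interval a (cmp g a))"
proof (rule bij_betw_imageI)
  show "inj_on (\<lambda>(h, k). cmp h a) (factorisations g)"
  proof (rule inj_onI, clarify)
    fix h k h' k'
    assume fhk: "(h, k) \<in> factorisations g" and fhk': "(h', k') \<in> factorisations g"
      and eq: "cmp h a = cmp h' a"
    have h_eq: "h = h'"
      using cancel[OF factorisation_compose(1)[OF g fhk] factorisation_compose(1)[OF g fhk'] eq] .
    have hk: "t h = s k" "cmp k h = g" and hk': "t h' = s k'" "cmp k' h' = g"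
      using fhk fhk' unfolding factorisations_def by auto
    have "cmp k h = cmp k' h" using hk(2) hk'(2) unfolding h_eq by simp
    then have "k = k'" using cancel[OF hk(1)] hk'(1) unfolding h_eq by blast
    with h_eq show "h = h' \<and> k = k'" by simp
  qed
  show "(\<lambda>(h, k). cmp h a) ` factorisations g = interval a (cmp g a)"
  proof
    show "(\<lambda>(h, k). cmp h a) ` factorisations g \<subseteq> interval a (cmp g a)"
    proof clarify
      fix h k assume "(h, k) \<in> factorisations g"
      note hk = factorisation_compose[OF g this]
      show "cmp h a \<in> interval a (cmp g a)"
        unfolding interval_def mle_def using hk(1,2) hk(3)[symmetric] by blast
    qed
    show "interval a (cmp g a) \<subseteq> (\<lambda>(h, k). cmp h a) ` factorisations g"
    proof
      fix b assume "b \<in> interval a (cmp g a)"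
      then obtain h k where h: "t a = s h" "b = cmp h a" and k: "t b = s k" "cmp g a = cmp k b"
        unfolding interval_def mle_def by blast
      have "t (cmp h a) = s k" and "cmp k (cmp h a) = cmp g a"
        using h(2) k by simp_all
      then have "(h, k) \<in> factorisations g"
        using factorisation_through[OF h(1) _ g] unfolding factorisations_def by simp
      then show "b \<in> (\<lambda>(h, k). cmp h a) ` factorisations g"
        by (intro image_eqI[of _ _ "(h, k)"]) (simp_all add: h(2))
    qed
  qed
qed

lemma finite_interval:
  assumes fin: "\<forall>f. finite (proper_decomps s t e cmp f)"
  shows "finite (interval a c)"
proof (cases "mle s t cmp a c")
  case False
  then have "interval a c = {}" unfolding interval_def using mle_trans by blast
  then show ?thesis by simp
next
  case True
  then obtain g where g: "t a = s g" "c = cmp g a" unfolding mle_def by blast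
  have "finite (factorisations g)" using finite_factorisations fin by blast
  then show ?thesis
    using bij_betw_finite[OF interval_factorisations[OF g(1)]] g(2) by simp
qed

text \<open>By right cancellativity the quotient h in g = h f is unique, so the hat
  map is characterised by hat \<beta> [f, h f] = \<beta> h and vanishes off the order.\<close>
lemma hat_factor [simp]:
  assumes "t f = s h"
  shows "hat s t cmp \<beta> f (cmp h f) = \<beta> h"
proof -
  have "(THE h'. t f = s h' \<and> cmp h f = cmp h' f) = h"
    using assms cancel by (intro the_equality) (simp, metis)
  then show ?thesis using assms unfolding hat_def mle_def by auto
qed

lemma hat_outside: "\<not> mle s t cmp f g \<Longrightarrow> hat s t cmp \<beta> f g = 0"
  unfolding hat_def by simp

lemma hat_at_identity: "hat s t cmp \<beta> (e (s h)) h = \<beta> h"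
  using hat_factor[of "e (s h)" h \<beta>] by simp

lemma hat_invariant: "hat s t cmp \<beta> \<in> invariant_subalgebra s t e cmp"
proof -
  have "hat s t cmp \<beta> f (cmp g f) = hat s t cmp \<beta> (e (t f)) g" if "t f = s g" for f g
    using that hat_factor[OF that] hat_at_identity[of \<beta> g] by simp
  then show ?thesis
    unfolding invariant_subalgebra_def incidence_algebra_def using hat_outside by blast
qed

lemma invariant_is_hat:
  assumes \<alpha>: "\<alpha> \<in> invariant_subalgebra s t e cmp"
  shows "hat s t cmp (\<lambda>h. \<alpha> (e (s h)) h) = \<alpha>"
proof (intro ext)
  fix f g
  show "hat s t cmp (\<lambda>h. \<alpha> (e (s h)) h) f g = \<alpha> f g"
  proof (cases "mle s t cmp f g")
    case True
    then obtain h where h: "t f = s h" "g = cmp h f" unfolding mle_def by blast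
    have "\<alpha> f g = \<alpha> (e (t f)) h" using \<alpha> h unfolding invariant_subalgebra_def by auto
    then show ?thesis using h by simp
  next
    case False
    then show ?thesis using \<alpha> hat_outside
      unfolding invariant_subalgebra_def incidence_algebra_def by auto
  qed
qed

lemma bij_hat:
  "bij_betw (hat s t cmp :: ('m \<Rightarrow> 'r::comm_ring_1) \<Rightarrow> _) UNIV (invariant_subalgebra s t e cmp)"
    (is "bij_betw ?hat UNIV ?inv")
proof (rule bij_betw_imageI)
  show "inj ?hat"
  proof (rule injI, rule ext)
    fix \<alpha> \<beta> :: "'m \<Rightarrow> 'r" and h
    assume "?hat \<alpha> = ?hat \<beta>"
    then show "\<alpha> h = \<beta> h" using hat_at_identity[of \<alpha> h] hat_at_identity[of \<beta> h] by simp
  qed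
  show "range ?hat = ?inv"
  proof
    show "range ?hat \<subseteq> ?inv"
      using hat_invariant by blast
    show "?inv \<subseteq> range ?hat"
    proof
      fix \<alpha> assume "\<alpha> \<in> ?inv"
      then have "\<alpha> = ?hat (\<lambda>h. \<alpha> (e (s h)) h)" by (rule invariant_is_hat[symmetric])
      then show "\<alpha> \<in> range ?hat" by (metis rangeI)
    qed
  qed
qed

text \<open>hat is multiplicative: reindexing the convolution sum over the
  factorisations of g by the interval [a, g a].\<close>
lemma hat_conv:
  "hat s t cmp (conv s t cmp \<alpha> \<beta>) a c = inc_mult (mle s t cmp) (hat s t cmp \<alpha>) (hat s t cmp \<beta>) a c"
proof (cases "mle s t cmp a c")
  case False
  then show ?thesis by (simp add: hat_outside inc_mult_def)
next
  case True
  then obtain g where g: "t a = s g" and c: "c = cmp g a" unfolding mle_def by blast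
  have "hat s t cmp (conv s t cmp \<alpha> \<beta>) a c = (\<Sum>(h, k) \<in> factorisations g. \<alpha> h * \<beta> k)"
    using g c by (simp add: conv_def factorisations_def)
  also have "\<dots> = (\<Sum>(h, k) \<in> factorisations g.
      hat s t cmp \<alpha> a (cmp h a) * hat s t cmp \<beta> (cmp h a) c)"
  proof (rule sum.cong[OF refl], clarify)
    fix h k assume "(h, k) \<in> factorisations g"
    note hk = factorisation_compose[OF g this]
    have "c = cmp k (cmp h a)" using hk(3) c by simp
    then show "\<alpha> h * \<beta> k = hat s t cmp \<alpha> a (cmp h a) * hat s t cmp \<beta> (cmp h a) c"
      by (simp only: hat_factor[OF hk(1)] hat_factor[OF hk(2)])
  qed
  also have "\<dots> = (\<Sum>b \<in> interval a c. hat s t cmp \<alpha> a b * hat s t cmp \<beta> b c)"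
    using sum.reindex_bij_betw[OF interval_factorisations[OF g]] c
    by (simp add: case_prod_unfold)
  finally show ?thesis using True by (simp add: inc_mult_def interval_def)
qed

text \<open>hat maps the convolution unit to the incidence unit: h f = f iff h is the
  identity 1_{tf}, again by cancellation.\<close>
lemma hat_conv_unit:
  "hat s t cmp (conv_unit e :: 'm \<Rightarrow> 'r::comm_ring_1) a c = inc_unit (mle s t cmp) a c"
proof (cases "mle s t cmp a c")
  case False
  then have "a \<noteq> c" using mle_refl by blast
  then show ?thesis using False by (simp add: hat_outside inc_unit_def)
next
  case True
  then obtain h where h: "t a = s h" and c: "c = cmp h a" unfolding mle_def by blast
  have "is_identity s e h \<longleftrightarrow> h = e (t a)"
    using h identity_at_source unfolding is_identity_def by auto
  also have "\<dots> \<longleftrightarrow> a = c"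
  proof
    assume "h = e (t a)"
    then show "a = c" using c by simp
  next
    assume "a = c"
    then have "cmp h a = cmp (e (t a)) a" using c id_left by metis
    then show "h = e (t a)" using cancel[of a h "e (t a)"] h by simp
  qed
  finally have "(conv_unit e h :: 'r) = (if a = c then 1 else 0)"
    unfolding conv_unit_def is_identity_def by simp
  moreover have "hat s t cmp (conv_unit e :: 'm \<Rightarrow> 'r) a c = conv_unit e h"
    using hat_factor[OF h] c by simp
  ultimately show ?thesis by (simp add: inc_unit_def)
qed

end

lemma hat_add: "hat s t cmp (\<lambda>f. \<alpha> f + \<beta> f) a c = hat s t cmp \<alpha> a c + hat s t cmp \<beta> a c"
  unfolding hat_def by simp

lemma hat_scale: "hat s t cmp (\<lambda>f. r * \<alpha> f) a c = r * hat s t cmp \<alpha> a c"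
  unfolding hat_def by simp

theorem theorem7p4:
  fixes s t :: "'m \<Rightarrow> 'o" and e :: "'o \<Rightarrow> 'm" and cmp :: "'m \<Rightarrow> 'm \<Rightarrow> 'm"
  assumes "moebius_category s t e cmp"
    and "right_cancellative s t cmp"
  shows "partial_order_on UNIV {(f, g). mle s t cmp f g}
    \<and> (\<forall>a c. finite {b. mle s t cmp a b \<and> mle s t cmp b c})
    \<and> bij_betw (hat s t cmp :: ('m \<Rightarrow> 'r::comm_ring_1) \<Rightarrow> _) UNIV (invariant_subalgebra s t e cmp)
    \<and> (\<forall>\<alpha> \<beta> :: 'm \<Rightarrow> 'r. hat s t cmp (conv s t cmp \<alpha> \<beta>)
           = inc_mult (mle s t cmp) (hat s t cmp \<alpha>) (hat s t cmp \<beta>))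
    \<and> (\<forall>\<alpha> \<beta> :: 'm \<Rightarrow> 'r. hat s t cmp (\<lambda>f. \<alpha> f + \<beta> f) = (\<lambda>a c. hat s t cmp \<alpha> a c + hat s t cmp \<beta> a c))
    \<and> (\<forall>(r::'r) (\<alpha> :: 'm \<Rightarrow> 'r). hat s t cmp (\<lambda>f. r * \<alpha> f) = (\<lambda>a c. r * hat s t cmp \<alpha> a c))
    \<and> hat s t cmp (conv_unit e :: 'm \<Rightarrow> 'r) = inc_unit (mle s t cmp)"
proof -
  interpret right_cancellative_category s t e cmp
    using assms unfolding moebius_category_def by unfold_locales auto
  have fin: "\<forall>f. finite (proper_decomps s t e cmp f)"
    using assms(1) unfolding moebius_category_def by blast
  have "partial_order_on UNIV {(f, g). mle s t cmp f g}"
    unfolding partial_order_on_def preorder_on_def refl_on_def trans_def antisym_def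
    using mle_refl mle_trans mle_antisym[OF fin] by blast
  moreover have "\<forall>a c. finite {b. mle s t cmp a b \<and> mle s t cmp b c}"
    using finite_interval[OF fin] unfolding interval_def by blast
  ultimately show ?thesis
    using bij_hat by (simp add: fun_eq_iff hat_conv hat_conv_unit hat_add hat_scale)
qed

end
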